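(* Let $S$ be a functional PTS specification. If $\Gamma\models_S M:A$, $\Gamma\vdash_{\lambda S^*}M':A$ and $M\equiv_\beta M'$, then $\Gamma\models_S M':A$.
   Context: PTS: specification $S=(\mathcal S,\mathcal A,\mathcal R)$ (sorts, axioms $(s_1:s_2)$, rules $(s_1,s_2,s_3)$), functional meaning $\mathcal A,\mathcal R$ are functional relations; $\lambda S$ has terms $s\mid x\mid M\,N\mid\lambda x:A.M\mid\Pi x:A.B$ and the standard PTS typing rules (conversion modulo $\equiv_\beta$); $\mathrm{WF}_{\lambda S}(\Gamma)$ means $\Gamma$ is well formed. A top-sort is a sort $s$ with no $(s:s')\in\mathcal A$. The minimal completion $S^*$: sorts $\mathcal S\cup\{\tau\}$ ($\tau\notin\mathcal S$), axioms $\mathcal A\cup\{(s_1:\tau)\mid s_1$ a top-sort of $S\}$, rules $\mathcal R\cup\{(s_1,s_2,\tau)\mid s_1,s_2\in\mathcal S\cup\{\tau\}$, no $s_3$ with $(s_1,s_2,s_3)\in\mathcal R\}$. Reducibility predicate $\Gamma\models_S M:A$, defined by recursion: it holds iff $\mathrm{WF}_{\lambda S}(\Gamma)$, $\Gamma\vdash_{\lambda S^*}M:A$ and $\Gamma\vdash_{\lambda S^*}A:s$ for some sort $s$, and moreover: if $s\neq\tau$ or $A=s'$ for some $s'\in\mathcal S$, then there are $M',A'$ with $M\longrightarrow_\beta^*M'$, $A\longrightarrow_\beta^*A'$ and $\Gamma\vdash_{\lambda S}M':A'$; if $s=\tau$ and $A=\Pi x:B.C$, then for every $N$ with $\Gamma\models_S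 N:B$ we have $\Gamma\models_S M\,N:C[N/x]$. (These cases are exhaustive and the recursion is well founded.) *)

theory Defs
  imports Main
begin

datatype 's trm =
    Srt 's
  | Var nat
  | App "'s trm" "'s trm"
  | Lam "'s trm" "'s trm"   (* Lam A M  =  \<lambda>x:A. M, body under one binder *)
  | Pi  "'s trm" "'s trm"   (* Pi A B   =  \<Pi>x:A. B, codomain under one binder *)

fun lift :: "nat \<Rightarrow> 's trm \<Rightarrow> 's trm" where
  "lift k (Srt s) = Srt s"
| "lift k (Var i) = (if i < k then Var i else Var (Suc i))"
| "lift k (App M N) = App (lift k M) (lift k N)"
| "lift k (Lam A M) = Lam (lift k A) (lift (Suc k) M)"
| "lift k (Pi A B) = Pi (lift k A) (lift (Suc k) B)"

fun subst :: "'s trm \<Rightarrow> nat \<Rightarrow> 's trm \<Rightarrow> 's trm" where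
  "subst (Srt s) k N = Srt s"
| "subst (Var i) k N = (if i < k then Var i else if i = k then N else Var (i - 1))"
| "subst (App M1 M2) k N = App (subst M1 k N) (subst M2 k N)"
| "subst (Lam A M) k N = Lam (subst A k N) (subst M (Suc k) (lift 0 N))"
| "subst (Pi A B) k N = Pi (subst A k N) (subst B (Suc k) (lift 0 N))"

inductive beta :: "'s trm \<Rightarrow> 's trm \<Rightarrow> bool" where
  beta_redex: "beta (App (Lam A M) N) (subst M 0 N)"
| beta_appL: "beta M M' \<Longrightarrow> beta (App M N) (App M' N)"
| beta_appR: "beta N N' \<Longrightarrow> beta (App M N) (App M N')"
| beta_lamL: "beta A A' \<Longrightarrow> beta (Lam A M) (Lam A' M)"
| beta_lamR: "beta M M' \<Longrightarrow> beta (Lam A M) (Lam A M')"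
| beta_piL: "beta A A' \<Longrightarrow> beta (Pi A B) (Pi A' B)"
| beta_piR: "beta B B' \<Longrightarrow> beta (Pi A B) (Pi A B')"

abbreviation beta_star :: "'s trm \<Rightarrow> 's trm \<Rightarrow> bool" where
  "beta_star \<equiv> beta\<^sup>*\<^sup>*"

abbreviation beta_eq :: "'s trm \<Rightarrow> 's trm \<Rightarrow> bool" where
  "beta_eq \<equiv> equivclp beta"

text \<open>Typing for the PTS with axioms Ax and rules Rl. Contexts are lists of types,
  the head being the type of de Bruijn variable 0.\<close>
inductive has_type :: "('s \<times> 's) set \<Rightarrow> ('s \<times> 's \<times> 's) set
                  \<Rightarrow> 's trm list \<Rightarrow> 's trm \<Rightarrow> 's trm \<Rightarrow> bool"
  for Ax Rl where
  t_axiom: "(s1, s2) \<in> Ax \<Longrightarrow> has_type Ax Rl [] (Srt s1) (Srt s2)"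
| t_start: "has_type Ax Rl \<Gamma> A (Srt s) \<Longrightarrow> has_type Ax Rl (A # \<Gamma>) (Var 0) (lift 0 A)"
| t_weak: "has_type Ax Rl \<Gamma> M B \<Longrightarrow> has_type Ax Rl \<Gamma> C (Srt s)
           \<Longrightarrow> has_type Ax Rl (C # \<Gamma>) (lift 0 M) (lift 0 B)"
| t_pi: "has_type Ax Rl \<Gamma> A (Srt s1) \<Longrightarrow> has_type Ax Rl (A # \<Gamma>) B (Srt s2) \<Longrightarrow> (s1, s2, s3) \<in> Rl
         \<Longrightarrow> has_type Ax Rl \<Gamma> (Pi A B) (Srt s3)"
| t_lam: "has_type Ax Rl (A # \<Gamma>) M B \<Longrightarrow> has_type Ax Rl \<Gamma> (Pi A B) (Srt s)
          \<Longrightarrow> has_type Ax Rl \<Gamma> (Lam A M) (Pi A B)"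
| t_app: "has_type Ax Rl \<Gamma> M (Pi A B) \<Longrightarrow> has_type Ax Rl \<Gamma> N A
          \<Longrightarrow> has_type Ax Rl \<Gamma> (App M N) (subst B 0 N)"
| t_conv: "has_type Ax Rl \<Gamma> M A \<Longrightarrow> has_type Ax Rl \<Gamma> B (Srt s) \<Longrightarrow> beta_eq A B
           \<Longrightarrow> has_type Ax Rl \<Gamma> M B"

inductive wf_ctx :: "('s \<times> 's) set \<Rightarrow> ('s \<times> 's \<times> 's) set \<Rightarrow> 's trm list \<Rightarrow> bool"
  for Ax Rl where
  wf_nil: "wf_ctx Ax Rl []"
| wf_cons: "has_type Ax Rl \<Gamma> A (Srt s) \<Longrightarrow> wf_ctx Ax Rl (A # \<Gamma>)"

definition functional_spec :: "'s set \<Rightarrow> ('s \<times> 's) set \<Rightarrow> ('s \<times> 's \<times> 's) set \<Rightarrow> bool" where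
  "functional_spec Srts Ax Rl \<longleftrightarrow>
     Ax \<subseteq> Srts \<times> Srts \<and> Rl \<subseteq> Srts \<times> Srts \<times> Srts \<and>
     (\<forall>s1 s2 s2'. (s1, s2) \<in> Ax \<longrightarrow> (s1, s2') \<in> Ax \<longrightarrow> s2 = s2') \<and>
     (\<forall>s1 s2 s3 s3'. (s1, s2, s3) \<in> Rl \<longrightarrow> (s1, s2, s3') \<in> Rl \<longrightarrow> s3 = s3')"

definition top_sort :: "'s set \<Rightarrow> ('s \<times> 's) set \<Rightarrow> 's \<Rightarrow> bool" where
  "top_sort Srts Ax s \<longleftrightarrow> s \<in> Srts \<and> (\<nexists>s'. (s, s') \<in> Ax)"

text \<open>Both \<lambda>S and \<lambda>S* are formulated over sort type 's option: Some s is the sort s of S,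
  None is the fresh sort \<tau> of the minimal completion S*.\<close>

definition ax_S :: "('s \<times> 's) set \<Rightarrow> ('s option \<times> 's option) set" where
  "ax_S Ax = {(Some a, Some b) | a b. (a, b) \<in> Ax}"

definition rl_S :: "('s \<times> 's \<times> 's) set \<Rightarrow> ('s option \<times> 's option \<times> 's option) set" where
  "rl_S Rl = {(Some a, Some b, Some c) | a b c. (a, b, c) \<in> Rl}"

definition srts_star :: "'s set \<Rightarrow> 's option set" where
  "srts_star Srts = Some ` Srts \<union> {None}"

definition ax_star :: "'s set \<Rightarrow> ('s \<times> 's) set \<Rightarrow> ('s option \<times> 's option) set" where
  "ax_star Srts Ax = ax_S Ax \<union> {(Some s, None) | s. top_sort Srts Ax s}"

definition rl_star :: "'s set \<Rightarrow> ('s \<times> 's \<times> 's) set \<Rightarrow> ('s option \<times> 's option \<times> 's option) set" where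
  "rl_star Srts Rl = rl_S Rl \<union>
     {(s1, s2, None) | s1 s2. s1 \<in> srts_star Srts \<and> s2 \<in> srts_star Srts \<and>
                              (\<nexists>s3. (s1, s2, s3) \<in> rl_S Rl)}"

abbreviation typ_S where "typ_S Ax Rl \<equiv> has_type (ax_S Ax) (rl_S Rl)"
abbreviation typ_star where "typ_star Srts Ax Rl \<equiv> has_type (ax_star Srts Ax) (rl_star Srts Rl)"
abbreviation wf_S where "wf_S Ax Rl \<equiv> wf_ctx (ax_S Ax) (rl_S Rl)"

text \<open>R is "the" reducibility predicate \<Gamma> \<Turnstile>_S M : A iff it satisfies the defining equation
  (the paper defines it by well-founded recursion, so such an R is unique).\<close>
definition is_reducibility ::
  "'s set \<Rightarrow> ('s \<times> 's) set \<Rightarrow> ('s \<times> 's \<times> 's) set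
   \<Rightarrow> ('s option trm list \<Rightarrow> 's option trm \<Rightarrow> 's option trm \<Rightarrow> bool) \<Rightarrow> bool" where
  "is_reducibility Srts Ax Rl R \<longleftrightarrow>
     (\<forall>\<Gamma> M A. R \<Gamma> M A \<longleftrightarrow>
        wf_S Ax Rl \<Gamma> \<and> typ_star Srts Ax Rl \<Gamma> M A \<and>
        (\<exists>s. typ_star Srts Ax Rl \<Gamma> A (Srt s) \<and>
           ((s \<noteq> None \<or> (\<exists>s'\<in>Srts. A = Srt (Some s'))) \<longrightarrow>
              (\<exists>M' A'. beta_star M M' \<and> beta_star A A' \<and> typ_S Ax Rl \<Gamma> M' A')) \<and>
           (\<forall>B C. s = None \<and> A = Pi B C \<longrightarrow>
              (\<forall>N. R \<Gamma> N B \<longrightarrow> R \<Gamma> (App M N) (subst C 0 N)))))"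

end

theory Submission
  imports Defs "HOL-Library.Confluence"
begin

text \<open>
  The defining clause of \<Gamma> \<Turnstile> M : A splits on the sort s of A in S*. If s \<noteq> \<tau> or A is
  a sort, it asks for a \<lambda>S-typable reduct of M; by Church-Rosser this reduct and M' have a
  common reduct, which is still \<lambda>S-typable by subject reduction. If A = \<Pi>x:B.C lives in \<tau>,
  we must show that M' N is reducible at C[N] whenever M N is, and since M' N \<equiv>\<beta> M N this is
  the same problem at the type C[N]. We induct on the number of nested products of A whose
  codomain lives in \<tau>. If C lives in \<tau>, substituting N does not increase this number: \<tau> has
  no axiom, so no variable is a type living in \<tau>. If C lives in another sort, then so does
  C[N], and by uniqueness of types (S* is functional) the product clause is vacuous for C[N].
\<close>

section \<open>De Bruijn lifting and substitution\<close>

declare subst.simps(2) [simp del]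

lemma subst_Var_eq [simp]: "subst (Var k) k u = u"
  by (simp add: subst.simps)

lemma subst_Var_gt [simp]: "i < j \<Longrightarrow> subst (Var j) i u = Var (j - 1)"
  by (simp add: subst.simps)

lemma subst_Var_lt [simp]: "j < i \<Longrightarrow> subst (Var j) i u = Var j"
  by (simp add: subst.simps)

lemma lift_lift: "i \<le> k \<Longrightarrow> lift (Suc k) (lift i t) = lift i (lift k t)"
  by (induct t arbitrary: i k) auto

lemma lift_subst [simp]:
  "j \<le> i \<Longrightarrow> lift i (subst t j s) = subst (lift (Suc i) t) j (lift i s)"
  by (induct t arbitrary: i j s) (auto simp: subst.simps lift_lift)

lemma lift_subst_lt:
  "i \<le> j \<Longrightarrow> lift i (subst t j s) = subst (lift i t) (Suc j) (lift i s)"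
  by (induct t arbitrary: i j s) (auto simp: subst.simps lift_lift)

lemma subst_lift [simp]: "subst (lift k t) k s = t"
  by (induct t arbitrary: k s) simp_all

lemma subst_subst:
  "i \<le> j \<Longrightarrow> subst (subst t (Suc j) (lift i v)) i (subst u j v) = subst (subst t i u) j v"
  by (induct t arbitrary: i j u v)
    (simp_all add: diff_Suc subst.simps lift_lift [symmetric] lift_subst_lt split: nat.split)

lemma lift_eq_Srt: "lift k X = Srt s \<Longrightarrow> X = Srt s"
  by (cases X) (auto split: if_splits)

lemma lift_eq_Var: "lift 0 X = Var i \<Longrightarrow> \<exists>j. X = Var j \<and> i = Suc j"
  by (cases X) (auto split: if_splits)

lemma lift_eq_App: "lift k X = App P N \<Longrightarrow> \<exists>P0 N0. X = App P0 N0 \<and> P = lift k P0 \<and> N = lift k N0"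
  by (cases X) (auto split: if_splits)

lemma lift_eq_Lam:
  "lift k X = Lam A M \<Longrightarrow> \<exists>A0 M0. X = Lam A0 M0 \<and> A = lift k A0 \<and> M = lift (Suc k) M0"
  by (cases X) (auto split: if_splits)

lemma lift_eq_Pi:
  "lift k X = Pi A B \<Longrightarrow> \<exists>A0 B0. X = Pi A0 B0 \<and> A = lift k A0 \<and> B = lift (Suc k) B0"
  by (cases X) (auto split: if_splits)

section \<open>Confluence of beta reduction\<close>

inductive_cases beta_cases [elim!]:
  "beta (Var i) t"
  "beta (Srt s) t"
  "beta (Lam A M) t"
  "beta (Pi A B) t"
  "beta (App M N) t"

lemma rtranclp_map:
  assumes "\<And>x y. r x y \<Longrightarrow> s\<^sup>*\<^sup>* (f x) (f y)" and "r\<^sup>*\<^sup>* a b"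
  shows "s\<^sup>*\<^sup>* (f a) (f b)"
  using assms(2) by induct (auto intro: rtranclp_trans assms(1))

lemma equivclp_map:
  assumes "\<And>x y. r x y \<Longrightarrow> equivclp s (f x) (f y)" and "equivclp r a b"
  shows "equivclp s (f a) (f b)"
  using assms(2)
proof induct
  case (step y z)
  then show ?case by (meson assms(1) equivclp_sym equivclp_trans)
qed simp

lemma beta_star_App: "beta_star M M' \<Longrightarrow> beta_star N N' \<Longrightarrow> beta_star (App M N) (App M' N')"
proof -
  assume "beta_star M M'" "beta_star N N'"
  then have "beta_star (App M N) (App M' N)" "beta_star (App M' N) (App M' N')"
    by (auto intro: rtranclp_map [where f = "\<lambda>x. App x N"] rtranclp_map [where f = "App M'"]
        beta.intros)
  then show ?thesis by (rule rtranclp_trans)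
qed

lemma beta_star_Lam: "beta_star A A' \<Longrightarrow> beta_star M M' \<Longrightarrow> beta_star (Lam A M) (Lam A' M')"
proof -
  assume "beta_star A A'" "beta_star M M'"
  then have "beta_star (Lam A M) (Lam A' M)" "beta_star (Lam A' M) (Lam A' M')"
    by (auto intro: rtranclp_map [where f = "\<lambda>x. Lam x M"] rtranclp_map [where f = "Lam A'"]
        beta.intros)
  then show ?thesis by (rule rtranclp_trans)
qed

lemma beta_star_Pi: "beta_star A A' \<Longrightarrow> beta_star B B' \<Longrightarrow> beta_star (Pi A B) (Pi A' B')"
proof -
  assume "beta_star A A'" "beta_star B B'"
  then have "beta_star (Pi A B) (Pi A' B)" "beta_star (Pi A' B) (Pi A' B')"
    by (auto intro: rtranclp_map [where f = "\<lambda>x. Pi x B"] rtranclp_map [where f = "Pi A'"]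
        beta.intros)
  then show ?thesis by (rule rtranclp_trans)
qed

lemma beta_lift: "beta M M' \<Longrightarrow> beta (lift k M) (lift k M')"
  by (induct arbitrary: k set: beta) (auto intro: beta.intros)

lemma beta_subst: "beta M M' \<Longrightarrow> beta (subst M k N) (subst M' k N)"
  by (induct arbitrary: k N set: beta) (auto simp: subst_subst [of 0, symmetric] intro: beta.intros)

lemma beta_star_subst_arg: "beta N N' \<Longrightarrow> beta_star (subst M k N) (subst M k N')"
  by (induct M arbitrary: k N N')
    (auto simp: subst.simps beta_star_App beta_star_Lam beta_star_Pi beta_lift)

lemma beta_eq_lift: "beta_eq M M' \<Longrightarrow> beta_eq (lift k M) (lift k M')"
  by (rule equivclp_map) (auto intro: beta_lift)

lemma beta_eq_subst: "beta_eq M M' \<Longrightarrow> beta_eq (subst M k N) (subst M' k N)"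
  by (rule equivclp_map) (auto intro: beta_subst)

lemma beta_eq_subst_arg: "beta_eq N N' \<Longrightarrow> beta_eq (subst M k N) (subst M k N')"
  by (rule equivclp_map) (auto intro: beta_star_subst_arg rtranclp_into_equivclp)

lemma beta_eq_AppL: "beta_eq M M' \<Longrightarrow> beta_eq (App M N) (App M' N)"
  by (rule equivclp_map) (auto intro: beta.intros)

lemma beta_eq_PiR: "beta_eq B B' \<Longrightarrow> beta_eq (Pi A B) (Pi A B')"
  by (rule equivclp_map) (auto intro: beta.intros)

inductive par :: "'s trm \<Rightarrow> 's trm \<Rightarrow> bool" where
  par_Var [simp, intro!]: "par (Var n) (Var n)"
| par_Srt [simp, intro!]: "par (Srt s) (Srt s)"
| par_Lam [simp, intro!]: "par A A' \<Longrightarrow> par M M' \<Longrightarrow> par (Lam A M) (Lam A' M')"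
| par_Pi [simp, intro!]: "par A A' \<Longrightarrow> par B B' \<Longrightarrow> par (Pi A B) (Pi A' B')"
| par_App [simp, intro!]: "par M M' \<Longrightarrow> par N N' \<Longrightarrow> par (App M N) (App M' N')"
| par_beta [simp, intro!]: "par M M' \<Longrightarrow> par N N' \<Longrightarrow> par (App (Lam A M) N) (subst M' 0 N')"

inductive_cases par_cases [elim!]:
  "par (Var n) t"
  "par (Srt s) t"
  "par (Lam A M) t"
  "par (Pi A B) t"
  "par (App M N) t"

lemma par_refl [simp]: "par t t"
  by (induct t) simp_all

lemma beta_into_par: "beta M M' \<Longrightarrow> par M M'"
  by (induct set: beta) auto

lemma par_into_beta_star: "par M M' \<Longrightarrow> beta_star M M'"
proof (induct set: par)
  case (par_beta M M' N N' A)
  then have "beta_star (App (Lam A M) N) (App (Lam A M') N')"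
    by (simp add: beta_star_App beta_star_Lam)
  also have "beta (App (Lam A M') N') (subst M' 0 N')"
    by (rule beta_redex)
  finally show ?case .
qed (auto simp: beta_star_App beta_star_Lam beta_star_Pi)

lemma rtranclp_par_eq_beta_star: "par\<^sup>*\<^sup>* = beta_star"
proof (intro ext iffI)
  show "beta_star M M'" if "par\<^sup>*\<^sup>* M M'" for M M' :: "'s trm"
    using that by (induct rule: rtranclp_induct) (auto dest: par_into_beta_star)
  show "par\<^sup>*\<^sup>* M M'" if "beta_star M M'" for M M' :: "'s trm"
    using that by (induct rule: rtranclp_induct) (auto intro: rtranclp.rtrancl_into_rtrancl beta_into_par)
qed

lemma par_lift: "par M M' \<Longrightarrow> par (lift k M) (lift k M')"
  by (induct arbitrary: k set: par) auto

lemma par_subst: "par M M' \<Longrightarrow> par N N' \<Longrightarrow> par (subst M k N) (subst M' k N')"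
proof (induct M arbitrary: M' N N' k)
  case (Var x)
  then show ?case by (auto simp: subst.simps)
next
  case (App M1 M2)
  from App.prems(1) show ?case
  proof (cases rule: par.cases)
    case (par_App M1' M2')
    with App show ?thesis by simp
  next
    case (par_beta M0 M0' M2' A)
    have "par (subst (Lam A M0) k N) (subst (Lam A M0') k N')"
      using App.hyps(1) [of "Lam A M0'"] App.prems(2) par_beta by simp
    then have "par (subst M0 (Suc k) (lift 0 N)) (subst M0' (Suc k) (lift 0 N'))"
      by auto
    moreover have "par (subst M2 k N) (subst M2' k N')"
      using App.hyps(2) App.prems(2) par_beta by simp
    ultimately show ?thesis
      using par_beta by (simp add: subst_subst [of 0, symmetric])
  qed
qed (auto simp: par_lift)

fun complete_dev :: "'s trm \<Rightarrow> 's trm" where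
  "complete_dev (Var n) = Var n"
| "complete_dev (Srt s) = Srt s"
| "complete_dev (App (Lam A M) N) = subst (complete_dev M) 0 (complete_dev N)"
| "complete_dev (App M N) = App (complete_dev M) (complete_dev N)"
| "complete_dev (Lam A M) = Lam (complete_dev A) (complete_dev M)"
| "complete_dev (Pi A B) = Pi (complete_dev A) (complete_dev B)"

lemma par_complete_dev: "par M M' \<Longrightarrow> par M' (complete_dev M)"
  by (induct M arbitrary: M' rule: complete_dev.induct) (auto intro!: par_subst)

lemma confluentp_beta: "confluentp beta"
proof -
  have "strong_confluentp par"
    by (rule strong_confluentpI) (blast intro: par_complete_dev)
  then have "confluentp par"
    by (rule strong_confluentp_imp_confluentp)
  then show ?thesis
    unfolding confluentp_def rtranclp_conversep rtranclp_par_eq_beta_star .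
qed

lemma confluentp_equivclpD:
  assumes "confluentp r" and "equivclp r x y"
  shows "\<exists>u. r\<^sup>*\<^sup>* x u \<and> r\<^sup>*\<^sup>* y u"
proof -
  have "(r\<^sup>*\<^sup>* OO r\<inverse>\<inverse>\<^sup>*\<^sup>*) x y"
    using assms by (simp add: semiconfluentp_equivclp confluentp_imp_semiconfluentp)
  then show ?thesis
    by (auto simp: rtranclp_conversep)
qed

lemma church_rosser: "beta_eq M N \<Longrightarrow> \<exists>L. beta_star M L \<and> beta_star N L"
  by (rule confluentp_equivclpD [OF confluentp_beta])

lemma beta_star_Srt_inv: "beta_star (Srt s) X \<Longrightarrow> X = Srt s"
  by (induct rule: rtranclp_induct) auto

lemma beta_star_Pi_inv:
  "beta_star (Pi A B) X \<Longrightarrow> \<exists>A' B'. X = Pi A' B' \<and> beta_star A A' \<and> beta_star B B'"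
  by (induct rule: rtranclp_induct) (auto intro: rtranclp.rtrancl_into_rtrancl)

lemma beta_eq_Srt_iff [simp]: "beta_eq (Srt s) (Srt t) \<longleftrightarrow> s = t"
  by (auto dest!: church_rosser beta_star_Srt_inv)

lemma beta_eq_Pi_inj: "beta_eq (Pi A B) (Pi A' B') \<Longrightarrow> beta_eq A A' \<and> beta_eq B B'"
proof -
  assume "beta_eq (Pi A B) (Pi A' B')"
  then obtain L where "beta_star (Pi A B) L" "beta_star (Pi A' B') L"
    by (blast dest: church_rosser)
  then show ?thesis
    by (auto dest!: beta_star_Pi_inv
        intro: equivclp_trans [OF rtranclp_into_equivclp converse_rtranclp_into_equivclp])
qed

section \<open>Metatheory of pure type systems\<close>

inductive ctx_ins ::
  "('s \<times> 's) set \<Rightarrow> ('s \<times> 's \<times> 's) set \<Rightarrow> nat \<Rightarrow> 's trm list \<Rightarrow> 's trm list \<Rightarrow> bool"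
  for Ax Rl where
  ctx_ins_0: "has_type Ax Rl \<Gamma> C (Srt s) \<Longrightarrow> ctx_ins Ax Rl 0 \<Gamma> (C # \<Gamma>)"
| ctx_ins_Suc: "ctx_ins Ax Rl k \<Gamma> \<Gamma>' \<Longrightarrow> ctx_ins Ax Rl (Suc k) (A # \<Gamma>) (lift k A # \<Gamma>')"

inductive_cases ctx_ins_0E: "ctx_ins Ax Rl 0 \<Gamma> \<Gamma>'"
inductive_cases ctx_ins_SucE: "ctx_ins Ax Rl (Suc k) \<Gamma> \<Gamma>'"

lemma weakening:
  "has_type Ax Rl \<Gamma> M T \<Longrightarrow> ctx_ins Ax Rl k \<Gamma> \<Gamma>' \<Longrightarrow> has_type Ax Rl \<Gamma>' (lift k M) (lift k T)"
proof (induct arbitrary: k \<Gamma>' rule: has_type.induct)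
  case (t_axiom s1 s2)
  then show ?case
    using has_type.t_weak [OF has_type.t_axiom [OF t_axiom(1)]]
    by (cases k) (auto elim!: ctx_ins_0E ctx_ins_SucE)
next
  case (t_start \<Gamma> A s)
  show ?case
  proof (cases k)
    case 0
    with t_start.prems show ?thesis
      using has_type.t_weak [OF has_type.t_start [OF t_start.hyps(1)]] by (auto elim!: ctx_ins_0E)
  next
    case (Suc k')
    with t_start.prems obtain \<Gamma>0 where "\<Gamma>' = lift k' A # \<Gamma>0" "ctx_ins Ax Rl k' \<Gamma> \<Gamma>0"
      by (auto elim: ctx_ins_SucE)
    with t_start.hyps(2) have "has_type Ax Rl \<Gamma>' (Var 0) (lift 0 (lift k' A))"
      using has_type.t_start by fastforce
    with Suc show ?thesis
      by (simp add: lift_lift)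
  qed
next
  case (t_weak \<Gamma> M B C s)
  show ?case
  proof (cases k)
    case 0
    with t_weak show ?thesis
      by (auto elim!: ctx_ins_0E intro: has_type.t_weak)
  next
    case (Suc k')
    with t_weak.prems obtain \<Gamma>0 where "\<Gamma>' = lift k' C # \<Gamma>0" "ctx_ins Ax Rl k' \<Gamma> \<Gamma>0"
      by (auto elim: ctx_ins_SucE)
    with t_weak.hyps(2,4) have "has_type Ax Rl \<Gamma>' (lift 0 (lift k' M)) (lift 0 (lift k' B))"
      using has_type.t_weak by fastforce
    with Suc show ?thesis
      by (simp add: lift_lift)
  qed
next
  case (t_pi \<Gamma> A s1 B s2 s3)
  then show ?case
    using t_pi.hyps(4) [OF ctx_ins_Suc [OF t_pi.prems]] by (auto intro!: has_type.t_pi)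
next
  case (t_lam A \<Gamma> M B s)
  then show ?case
    using t_lam.hyps(2) [OF ctx_ins_Suc [OF t_lam.prems]] by (fastforce intro!: has_type.t_lam)
next
  case (t_app \<Gamma> M A B N)
  then show ?case by (fastforce intro: has_type.t_app)
next
  case (t_conv \<Gamma> M A B s)
  then show ?case by (fastforce intro: has_type.t_conv beta_eq_lift)
qed

lemma weakening_Suc0:
  "has_type Ax Rl (A # \<Gamma>) M T \<Longrightarrow> has_type Ax Rl \<Gamma> C (Srt s) \<Longrightarrow>
   has_type Ax Rl (lift 0 A # C # \<Gamma>) (lift 1 M) (lift 1 T)"
  by (rule weakening) (auto intro!: ctx_ins.intros)

inductive ctx_subst ::
  "('s \<times> 's) set \<Rightarrow> ('s \<times> 's \<times> 's) set \<Rightarrow> 's trm \<Rightarrow> nat \<Rightarrow> 's trm list \<Rightarrow> 's trm list \<Rightarrow> bool"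
  for Ax Rl where
  ctx_subst_0: "has_type Ax Rl \<Gamma> N B \<Longrightarrow> ctx_subst Ax Rl N 0 (B # \<Gamma>) \<Gamma>"
| ctx_subst_Suc: "ctx_subst Ax Rl N k \<Gamma> \<Gamma>' \<Longrightarrow>
    ctx_subst Ax Rl (lift 0 N) (Suc k) (A # \<Gamma>) (subst A k N # \<Gamma>')"

inductive_cases ctx_subst_0E: "ctx_subst Ax Rl N 0 \<Gamma> \<Gamma>'"
inductive_cases ctx_subst_SucE: "ctx_subst Ax Rl N (Suc k) \<Gamma> \<Gamma>'"
inductive_cases ctx_subst_NilE: "ctx_subst Ax Rl N k [] \<Gamma>'"

lemma substitution:
  "has_type Ax Rl \<Gamma> M T \<Longrightarrow> ctx_subst Ax Rl N k \<Gamma> \<Gamma>' \<Longrightarrow>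
   has_type Ax Rl \<Gamma>' (subst M k N) (subst T k N)"
proof (induct arbitrary: N k \<Gamma>' rule: has_type.induct)
  case (t_axiom s1 s2)
  then show ?case by (auto elim: ctx_subst_NilE)
next
  case (t_start \<Gamma> A s)
  show ?case
  proof (cases k)
    case 0
    with t_start show ?thesis by (auto elim: ctx_subst_0E)
  next
    case (Suc k')
    with t_start.prems obtain \<Gamma>0 N0 where
      "\<Gamma>' = subst A k' N0 # \<Gamma>0" "ctx_subst Ax Rl N0 k' \<Gamma> \<Gamma>0" "N = lift 0 N0"
      by (auto elim: ctx_subst_SucE)
    with t_start.hyps(2) have "has_type Ax Rl \<Gamma>' (Var 0) (lift 0 (subst A k' N0))"
      using has_type.t_start by fastforce
    with Suc \<open>N = lift 0 N0\<close> show ?thesis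
      by (simp add: lift_subst_lt)
  qed
next
  case (t_weak \<Gamma> M B C s)
  show ?case
  proof (cases k)
    case 0
    with t_weak show ?thesis by (auto elim: ctx_subst_0E)
  next
    case (Suc k')
    with t_weak.prems obtain \<Gamma>0 N0 where
      "\<Gamma>' = subst C k' N0 # \<Gamma>0" "ctx_subst Ax Rl N0 k' \<Gamma> \<Gamma>0" "N = lift 0 N0"
      by (auto elim: ctx_subst_SucE)
    with t_weak.hyps(2,4)
    have "has_type Ax Rl \<Gamma>' (lift 0 (subst M k' N0)) (lift 0 (subst B k' N0))"
      using has_type.t_weak by fastforce
    with Suc \<open>N = lift 0 N0\<close> show ?thesis
      by (simp add: lift_subst_lt)
  qed
next
  case (t_pi \<Gamma> A s1 B s2 s3)
  then show ?case
    using t_pi.hyps(4) [OF ctx_subst_Suc [OF t_pi.prems]] by (auto intro!: has_type.t_pi)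
next
  case (t_lam A \<Gamma> M B s)
  then show ?case
    using t_lam.hyps(2) [OF ctx_subst_Suc [OF t_lam.prems]] by (fastforce intro!: has_type.t_lam)
next
  case (t_app \<Gamma> M A B N')
  then show ?case
    by (fastforce simp: subst_subst [of 0, symmetric] intro: has_type.t_app)
next
  case (t_conv \<Gamma> M A B s)
  then show ?case by (fastforce intro: has_type.t_conv beta_eq_subst)
qed

lemma substitution_0:
  "has_type Ax Rl (B # \<Gamma>) M T \<Longrightarrow> has_type Ax Rl \<Gamma> N B \<Longrightarrow>
   has_type Ax Rl \<Gamma> (subst M 0 N) (subst T 0 N)"
  by (erule substitution) (rule ctx_subst_0)

lemma has_type_Var_inv:
  fixes Ax :: "('s \<times> 's) set"
  assumes "has_type Ax Rl \<Gamma> (Var i) T"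
  shows "beta_eq T ((lift 0 ^^ Suc i) (\<Gamma> ! i)) \<and>
    (\<exists>s. has_type Ax Rl \<Gamma> ((lift 0 ^^ Suc i) (\<Gamma> ! i)) (Srt s))"
  using assms
proof (induct \<Gamma> "Var i :: 's trm" T arbitrary: i rule: has_type.induct)
  case (t_start \<Gamma> A s)
  have "has_type Ax Rl (A # \<Gamma>) (lift 0 A) (Srt s)"
    using has_type.t_weak [OF t_start(1) t_start(1)] by simp
  with t_start show ?case
    by auto
next
  case (t_weak \<Gamma> M B C s)
  then obtain j where j: "M = Var j" "i = Suc j"
    using lift_eq_Var by metis
  with t_weak.hyps(2) obtain s' where
    "beta_eq B ((lift 0 ^^ Suc j) (\<Gamma> ! j))" "has_type Ax Rl \<Gamma> ((lift 0 ^^ Suc j) (\<Gamma> ! j)) (Srt s')"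
    by blast
  then have "beta_eq (lift 0 B) ((lift 0 ^^ Suc i) ((C # \<Gamma>) ! i))"
    "has_type Ax Rl (C # \<Gamma>) ((lift 0 ^^ Suc i) ((C # \<Gamma>) ! i)) (Srt s')"
    using j has_type.t_weak [OF _ t_weak.hyps(3)] beta_eq_lift [where k = 0] by fastforce+
  then show ?case
    by blast
next
  case (t_conv \<Gamma> A B s)
  then show ?case
    using equivclp_trans [OF equivclp_sym [OF \<open>beta_eq A B\<close>]] by blast
qed

lemma has_type_Srt_inv:
  fixes Ax :: "('s \<times> 's) set"
  shows "has_type Ax Rl \<Gamma> (Srt s) T \<Longrightarrow> \<exists>s'. (s, s') \<in> Ax \<and> beta_eq T (Srt s')"
proof (induct \<Gamma> "Srt s :: 's trm" T rule: has_type.induct)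
  case (t_weak \<Gamma> M B C s0)
  then have "M = Srt s"
    by (auto dest: lift_eq_Srt)
  with t_weak.hyps(2) obtain s' where "(s, s') \<in> Ax" "beta_eq B (Srt s')"
    by blast
  then show ?case
    using beta_eq_lift [of B "Srt s'" 0] by auto
next
  case (t_conv \<Gamma> A B s)
  then show ?case
    using equivclp_trans [OF equivclp_sym [OF \<open>beta_eq A B\<close>]] by blast
qed auto

lemma has_type_Pi_inv:
  fixes Ax :: "('s \<times> 's) set"
  shows "has_type Ax Rl \<Gamma> (Pi A B) T \<Longrightarrow>
    \<exists>s1 s2 s3. has_type Ax Rl \<Gamma> A (Srt s1) \<and> has_type Ax Rl (A # \<Gamma>) B (Srt s2) \<and>
      (s1, s2, s3) \<in> Rl \<and> beta_eq T (Srt s3)"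
proof (induct \<Gamma> "Pi A B" T arbitrary: A B rule: has_type.induct)
  case (t_weak \<Gamma> M T C s)
  then obtain A0 B0 where AB: "M = Pi A0 B0" "A = lift 0 A0" "B = lift 1 B0"
    by (auto dest: lift_eq_Pi)
  with t_weak.hyps(2) obtain s1 s2 s3 where
    "has_type Ax Rl \<Gamma> A0 (Srt s1)" "has_type Ax Rl (A0 # \<Gamma>) B0 (Srt s2)"
    "(s1, s2, s3) \<in> Rl" "beta_eq T (Srt s3)"
    by blast
  with AB t_weak.hyps(3) show ?case
    using has_type.t_weak [of Ax Rl \<Gamma> A0 "Srt s1"] weakening_Suc0 [of Ax Rl A0 \<Gamma> B0 "Srt s2"]
      beta_eq_lift [of T "Srt s3" 0]
    by fastforce
next
  case (t_conv \<Gamma> A' B' s)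
  then show ?case
    using equivclp_trans [OF equivclp_sym [OF \<open>beta_eq A' B'\<close>]] by blast
qed auto

lemma has_type_Lam_inv:
  fixes Ax :: "('s \<times> 's) set"
  shows "has_type Ax Rl \<Gamma> (Lam A M) T \<Longrightarrow>
    \<exists>B s. has_type Ax Rl (A # \<Gamma>) M B \<and> has_type Ax Rl \<Gamma> (Pi A B) (Srt s) \<and> beta_eq T (Pi A B)"
proof (induct \<Gamma> "Lam A M" T arbitrary: A M rule: has_type.induct)
  case (t_weak \<Gamma> L T C s)
  then obtain A0 M0 where AM: "L = Lam A0 M0" "A = lift 0 A0" "M = lift 1 M0"
    by (auto dest: lift_eq_Lam)
  with t_weak.hyps(2) obtain B s' where
    "has_type Ax Rl (A0 # \<Gamma>) M0 B" "has_type Ax Rl \<Gamma> (Pi A0 B) (Srt s')" "beta_eq T (Pi A0 B)"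
    by blast
  with AM t_weak.hyps(3) show ?case
    using has_type.t_weak [of Ax Rl \<Gamma> "Pi A0 B" "Srt s'"] weakening_Suc0 [of Ax Rl A0 \<Gamma> M0 B]
      beta_eq_lift [of T "Pi A0 B" 0]
    by fastforce
next
  case (t_conv \<Gamma> A' B' s)
  then show ?case
    using equivclp_trans [OF equivclp_sym [OF \<open>beta_eq A' B'\<close>]] by blast
qed auto

lemma has_type_App_inv:
  fixes Ax :: "('s \<times> 's) set"
  shows "has_type Ax Rl \<Gamma> (App M N) T \<Longrightarrow>
    \<exists>A B. has_type Ax Rl \<Gamma> M (Pi A B) \<and> has_type Ax Rl \<Gamma> N A \<and> beta_eq T (subst B 0 N)"
proof (induct \<Gamma> "App M N" T arbitrary: M N rule: has_type.induct)
  case (t_app \<Gamma> M A B N)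
  show ?case
    using t_app.hyps(1,3) by (blast intro: equivclp_refl)
next
  case (t_weak \<Gamma> P T C s)
  then obtain M0 N0 where MN: "P = App M0 N0" "M = lift 0 M0" "N = lift 0 N0"
    by (auto dest: lift_eq_App)
  with t_weak.hyps(2) obtain A B where
    "has_type Ax Rl \<Gamma> M0 (Pi A B)" "has_type Ax Rl \<Gamma> N0 A" "beta_eq T (subst B 0 N0)"
    by blast
  with MN t_weak.hyps(3) show ?case
    using has_type.t_weak [of Ax Rl \<Gamma> M0 "Pi A B"] has_type.t_weak [of Ax Rl \<Gamma> N0 A]
      beta_eq_lift [of T "subst B 0 N0" 0]
    by fastforce
next
  case (t_conv \<Gamma> A' B' s)
  then show ?case
    using equivclp_trans [OF equivclp_sym [OF \<open>beta_eq A' B'\<close>]] by blast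
qed

lemma type_is_sort_or_has_sort:
  "has_type Ax Rl \<Gamma> M T \<Longrightarrow> (\<exists>s. T = Srt s) \<or> (\<exists>s. has_type Ax Rl \<Gamma> T (Srt s))"
proof (induct rule: has_type.induct)
  case (t_start \<Gamma> A s)
  then show ?case
    using has_type.t_weak [OF t_start.hyps(1) t_start.hyps(1)] by auto
next
  case (t_weak \<Gamma> M B C s)
  then show ?case
    using has_type.t_weak [OF _ t_weak.hyps(3), of B] by fastforce
next
  case (t_app \<Gamma> M A B N)
  then obtain s2 where "has_type Ax Rl (A # \<Gamma>) B (Srt s2)"
    by (blast dest: has_type_Pi_inv)
  then show ?case
    using substitution_0 [OF _ t_app.hyps(3)] by fastforce
qed blast+

lemma has_sort_subst_codomain:
  assumes "has_type Ax Rl \<Gamma> M (Pi A B)" and "has_type Ax Rl \<Gamma> N A"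
  shows "\<exists>s. has_type Ax Rl \<Gamma> (subst B 0 N) (Srt s)"
proof -
  obtain s where "has_type Ax Rl \<Gamma> (Pi A B) (Srt s)"
    using type_is_sort_or_has_sort [OF assms(1)] by blast
  then obtain s2 where "has_type Ax Rl (A # \<Gamma>) B (Srt s2)"
    by (blast dest: has_type_Pi_inv)
  then show ?thesis
    using substitution_0 [OF _ assms(2)] by fastforce
qed

inductive ctx_conv ::
  "('s \<times> 's) set \<Rightarrow> ('s \<times> 's \<times> 's) set \<Rightarrow> 's trm list \<Rightarrow> 's trm list \<Rightarrow> bool"
  for Ax Rl where
  ctx_conv_hd: "beta_eq A A' \<Longrightarrow> has_type Ax Rl \<Gamma> A' (Srt s) \<Longrightarrow>
    ctx_conv Ax Rl (A # \<Gamma>) (A' # \<Gamma>)"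
| ctx_conv_tl: "ctx_conv Ax Rl \<Gamma> \<Gamma>' \<Longrightarrow> ctx_conv Ax Rl (A # \<Gamma>) (A # \<Gamma>')"

inductive_cases ctx_conv_NilE: "ctx_conv Ax Rl [] \<Gamma>'"
inductive_cases ctx_conv_ConsE: "ctx_conv Ax Rl (A # \<Gamma>) \<Gamma>'"

lemma context_conversion:
  "has_type Ax Rl \<Gamma> M T \<Longrightarrow> ctx_conv Ax Rl \<Gamma> \<Gamma>' \<Longrightarrow> has_type Ax Rl \<Gamma>' M T"
proof (induct arbitrary: \<Gamma>' rule: has_type.induct)
  case (t_axiom s1 s2)
  then show ?case by (auto elim: ctx_conv_NilE)
next
  case (t_start \<Gamma> A s)
  from t_start.prems show ?case
  proof (rule ctx_conv_ConsE)
    fix A' s'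
    assume \<Gamma>': "\<Gamma>' = A' # \<Gamma>" and "beta_eq A A'" and A': "has_type Ax Rl \<Gamma> A' (Srt s')"
    have "has_type Ax Rl (A' # \<Gamma>) (Var 0) (lift 0 A')"
      using A' by (rule has_type.t_start)
    moreover have "has_type Ax Rl (A' # \<Gamma>) (lift 0 A) (Srt s)"
      using has_type.t_weak [OF t_start.hyps(1) A'] by simp
    ultimately show ?thesis
      using \<Gamma>' \<open>beta_eq A A'\<close> by (auto intro: has_type.t_conv beta_eq_lift equivclp_sym)
  next
    fix \<Gamma>''
    assume "\<Gamma>' = A # \<Gamma>''" "ctx_conv Ax Rl \<Gamma> \<Gamma>''"
    with t_start.hyps(2) show ?thesis
      by (auto intro: has_type.t_start)
  qed
next
  case (t_weak \<Gamma> M B C s)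
  from t_weak.prems show ?case
    by (cases rule: ctx_conv_ConsE) (auto intro: has_type.t_weak t_weak.hyps(1,2,4))
next
  case (t_pi \<Gamma> A s1 B s2 s3)
  then show ?case by (blast intro: has_type.t_pi ctx_conv_tl)
next
  case (t_lam A \<Gamma> M B s)
  then show ?case by (blast intro: has_type.t_lam ctx_conv_tl)
next
  case (t_app \<Gamma> M A B N)
  then show ?case by (blast intro: has_type.t_app)
next
  case (t_conv \<Gamma> M A B s)
  then show ?case by (blast intro: has_type.t_conv)
qed

lemma context_conversion_hd:
  "has_type Ax Rl (A # \<Gamma>) M T \<Longrightarrow> beta_eq A A' \<Longrightarrow> has_type Ax Rl \<Gamma> A' (Srt s) \<Longrightarrow>
   has_type Ax Rl (A' # \<Gamma>) M T"
  by (blast intro: context_conversion ctx_conv_hd)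

lemma has_type_Lam_beta_dom:
  assumes "has_type Ax Rl (A # \<Gamma>) M B" and "beta A A'"
    and "has_type Ax Rl \<Gamma> (Pi A B) (Srt s)" and Pi': "has_type Ax Rl \<Gamma> (Pi A' B) (Srt s')"
  shows "has_type Ax Rl \<Gamma> (Lam A' M) (Pi A B)"
proof -
  obtain s1 where "has_type Ax Rl \<Gamma> A' (Srt s1)"
    using has_type_Pi_inv [OF Pi'] by blast
  with assms(1,2) have "has_type Ax Rl (A' # \<Gamma>) M B"
    by (blast intro: context_conversion_hd r_into_equivclp)
  then have "has_type Ax Rl \<Gamma> (Lam A' M) (Pi A' B)"
    using Pi' by (rule has_type.t_lam)
  moreover have "beta_eq (Pi A' B) (Pi A B)"
    using \<open>beta A A'\<close> by (blast intro: beta_piL converse_r_into_equivclp)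
  ultimately show ?thesis
    using assms(3) by (blast intro: has_type.t_conv)
qed

lemma beta_lift_inv: "beta (lift k M) N \<Longrightarrow> \<exists>M'. N = lift k M' \<and> beta M M'"
proof (induct "lift k M" N arbitrary: k M rule: beta.induct)
  case (beta_redex A L N)
  then obtain A0 L0 N0 where "M = App (Lam A0 L0) N0" "L = lift (Suc k) L0" "N = lift k N0"
    by (metis lift_eq_App lift_eq_Lam)
  then show ?case
    by (auto intro!: exI [of _ "subst L0 0 N0"] beta.beta_redex)
next
  case (beta_appL P P' Q)
  then show ?case
    by (metis beta.beta_appL lift.simps(3) lift_eq_App)
next
  case (beta_appR Q Q' P)
  then show ?case
    by (metis beta.beta_appR lift.simps(3) lift_eq_App)
next
  case (beta_lamL A A' L)
  then show ?case
    by (metis beta.beta_lamL lift.simps(4) lift_eq_Lam)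
next
  case (beta_lamR L L' A)
  then show ?case
    by (metis beta.beta_lamR lift.simps(4) lift_eq_Lam)
next
  case (beta_piL A A' B)
  then show ?case
    by (metis beta.beta_piL lift.simps(5) lift_eq_Pi)
next
  case (beta_piR B B' A)
  then show ?case
    by (metis beta.beta_piR lift.simps(5) lift_eq_Pi)
qed

lemma beta_PiE:
  assumes "beta (Pi A B) X"
  obtains (dom) A' where "beta A A'" "X = Pi A' B" | (cod) B' where "beta B B'" "X = Pi A B'"
  using assms by blast

lemma beta_LamE:
  assumes "beta (Lam A M) X"
  obtains (dom) A' where "beta A A'" "X = Lam A' M" | (body) M' where "beta M M'" "X = Lam A M'"
  using assms by blast

lemma beta_AppE:
  assumes "beta (App M N) X"
  obtains (redex) A0 M0 where "M = Lam A0 M0" "X = subst M0 0 N"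
  | (operator) M' where "beta M M'" "X = App M' N"
  | (operand) N' where "beta N N'" "X = App M N'"
  using assms by blast

lemma has_type_beta_redex:
  assumes lam: "has_type Ax Rl \<Gamma> (Lam A0 M0) (Pi A B)"
    and N: "has_type Ax Rl \<Gamma> N A"
    and sort: "has_type Ax Rl \<Gamma> (subst B 0 N) (Srt s)"
  shows "has_type Ax Rl \<Gamma> (subst M0 0 N) (subst B 0 N)"
proof -
  obtain B0 s' where M0: "has_type Ax Rl (A0 # \<Gamma>) M0 B0"
    and Pi0: "has_type Ax Rl \<Gamma> (Pi A0 B0) (Srt s')" and "beta_eq (Pi A B) (Pi A0 B0)"
    using has_type_Lam_inv [OF lam] by blast
  then have "beta_eq A A0" "beta_eq B0 B"
    by (auto dest: beta_eq_Pi_inj intro: equivclp_sym)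
  moreover obtain s1 where "has_type Ax Rl \<Gamma> A0 (Srt s1)"
    using has_type_Pi_inv [OF Pi0] by blast
  ultimately have "has_type Ax Rl \<Gamma> N A0"
    using N by (blast intro: has_type.t_conv)
  then have "has_type Ax Rl \<Gamma> (subst M0 0 N) (subst B0 0 N)"
    by (rule substitution_0 [OF M0])
  with sort \<open>beta_eq B0 B\<close> show ?thesis
    by (blast intro: has_type.t_conv beta_eq_subst)
qed

lemma subject_reduction_beta:
  "has_type Ax Rl \<Gamma> M T \<Longrightarrow> beta M X \<Longrightarrow> has_type Ax Rl \<Gamma> X T"
proof (induct arbitrary: X rule: has_type.induct)
  case (t_weak \<Gamma> M B C s)
  then show ?case
    by (blast dest: beta_lift_inv intro: has_type.t_weak)
next
  case (t_pi \<Gamma> A s1 B s2 s3)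
  from t_pi.prems show ?case
  proof (cases rule: beta_PiE)
    case (dom A')
    then have A': "has_type Ax Rl \<Gamma> A' (Srt s1)"
      by (auto intro: t_pi.hyps(2))
    with dom have "has_type Ax Rl (A' # \<Gamma>) B (Srt s2)"
      by (blast intro: context_conversion_hd [OF t_pi.hyps(3)] r_into_equivclp)
    with A' dom t_pi.hyps(5) show ?thesis
      by (auto intro: has_type.t_pi)
  next
    case (cod B')
    with t_pi show ?thesis
      by (blast intro: has_type.t_pi)
  qed
next
  case (t_lam A \<Gamma> M B s)
  from t_lam.prems show ?case
  proof (cases rule: beta_LamE)
    case (dom A')
    then have "has_type Ax Rl \<Gamma> (Pi A' B) (Srt s)"
      by (blast intro: t_lam.hyps(4) beta_piL)
    with dom t_lam.hyps(1,3) show ?thesis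
      by (blast intro: has_type_Lam_beta_dom)
  next
    case (body M')
    with t_lam show ?thesis
      by (blast intro: has_type.t_lam)
  qed
next
  case (t_app \<Gamma> M A B N)
  obtain s where sort: "has_type Ax Rl \<Gamma> (subst B 0 N) (Srt s)"
    using has_sort_subst_codomain [OF t_app.hyps(1,3)] by blast
  from t_app.prems show ?case
  proof (cases rule: beta_AppE)
    case (redex A0 M0)
    with t_app.hyps(1,3) sort show ?thesis
      by (blast intro: has_type_beta_redex)
  next
    case (operator M')
    then show ?thesis
      using has_type.t_app [OF t_app.hyps(2) t_app.hyps(3)] by simp
  next
    case (operand N')
    then have "has_type Ax Rl \<Gamma> (App M N') (subst B 0 N')"
      using has_type.t_app [OF t_app.hyps(1) t_app.hyps(4)] by simp
    moreover have "beta_eq (subst B 0 N') (subst B 0 N)"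
      using operand by (blast intro: equivclp_sym beta_eq_subst_arg)
    ultimately show ?thesis
      using operand sort by (blast intro: has_type.t_conv)
  qed
next
  case (t_conv \<Gamma> M A B s)
  then show ?case
    by (blast intro: has_type.t_conv)
qed auto

lemma subject_reduction:
  "beta_star M M' \<Longrightarrow> has_type Ax Rl \<Gamma> M T \<Longrightarrow> has_type Ax Rl \<Gamma> M' T"
  by (induct rule: rtranclp_induct) (auto intro: subject_reduction_beta)

lemma typable_reduct_of_beta_eq:
  assumes "beta_star M M1" and "has_type Ax Rl \<Gamma> M1 A" and "beta_eq M M'"
  shows "\<exists>M''. beta_star M' M'' \<and> has_type Ax Rl \<Gamma> M'' A"
proof -
  have "beta_eq M1 M'"
    using assms(1,3) by (blast intro: equivclp_trans equivclp_sym rtranclp_into_equivclp)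
  then obtain L where "beta_star M1 L" "beta_star M' L"
    by (blast dest: church_rosser)
  with assms(2) show ?thesis
    by (blast intro: subject_reduction)
qed

section \<open>Functional specifications\<close>

lemma types_unique:
  assumes "functional_spec Srts Ax Rl"
  shows "has_type Ax Rl \<Gamma> M T \<Longrightarrow> has_type Ax Rl \<Gamma> M T' \<Longrightarrow> beta_eq T T'"
proof (induct M arbitrary: \<Gamma> T T')
  case (Var i)
  then have "beta_eq T ((lift 0 ^^ Suc i) (\<Gamma> ! i))" "beta_eq T' ((lift 0 ^^ Suc i) (\<Gamma> ! i))"
    by (blast dest: has_type_Var_inv)+
  then show ?case
    by (rule equivclp_trans [OF _ equivclp_sym])
next
  case (Srt s)
  then obtain s' s'' where "(s, s') \<in> Ax" "(s, s'') \<in> Ax"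
    and T: "beta_eq T (Srt s')" and T': "beta_eq T' (Srt s'')"
    by (blast dest: has_type_Srt_inv)
  with assms have "s' = s''"
    unfolding functional_spec_def by blast
  with T T' show ?case
    by (metis equivclp_trans equivclp_sym)
next
  case (App M N)
  then obtain A B A' B' where "has_type Ax Rl \<Gamma> M (Pi A B)" "has_type Ax Rl \<Gamma> M (Pi A' B')"
    and T: "beta_eq T (subst B 0 N)" and T': "beta_eq T' (subst B' 0 N)"
    by (blast dest: has_type_App_inv)
  with App.hyps(1) have "beta_eq B B'"
    by (blast dest: beta_eq_Pi_inj)
  then have "beta_eq (subst B 0 N) (subst B' 0 N)"
    by (rule beta_eq_subst)
  with T T' show ?case
    by (metis equivclp_trans equivclp_sym)
next
  case (Lam A M)
  then obtain B B' where "has_type Ax Rl (A # \<Gamma>) M B" "has_type Ax Rl (A # \<Gamma>) M B'"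
    and T: "beta_eq T (Pi A B)" and T': "beta_eq T' (Pi A B')"
    by (blast dest: has_type_Lam_inv)
  with Lam.hyps(2) have "beta_eq (Pi A B) (Pi A B')"
    by (blast intro: beta_eq_PiR)
  with T T' show ?case
    by (metis equivclp_trans equivclp_sym)
next
  case (Pi A B)
  then obtain s1 s2 s3 s1' s2' s3' where
    "has_type Ax Rl \<Gamma> A (Srt s1)" "has_type Ax Rl (A # \<Gamma>) B (Srt s2)" "(s1, s2, s3) \<in> Rl"
    "has_type Ax Rl \<Gamma> A (Srt s1')" "has_type Ax Rl (A # \<Gamma>) B (Srt s2')" "(s1', s2', s3') \<in> Rl"
    and T: "beta_eq T (Srt s3)" and T': "beta_eq T' (Srt s3')"
    by (blast dest: has_type_Pi_inv)
  with Pi.hyps have "s1 = s1'" "s2 = s2'"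
    by (metis beta_eq_Srt_iff)+
  with \<open>(s1, s2, s3) \<in> Rl\<close> \<open>(s1', s2', s3') \<in> Rl\<close> assms have "s3 = s3'"
    unfolding functional_spec_def by blast
  with T T' show ?case
    by (metis equivclp_trans equivclp_sym)
qed

lemma functional_spec_star:
  assumes "functional_spec Srts Ax Rl"
  shows "functional_spec (srts_star Srts) (ax_star Srts Ax) (rl_star Srts Rl)"
proof -
  have Ax: "Ax \<subseteq> Srts \<times> Srts" "\<And>s1 s2 s2'. (s1, s2) \<in> Ax \<Longrightarrow> (s1, s2') \<in> Ax \<Longrightarrow> s2 = s2'"
    and Rl: "Rl \<subseteq> Srts \<times> Srts \<times> Srts"
      "\<And>s1 s2 s3 s3'. (s1, s2, s3) \<in> Rl \<Longrightarrow> (s1, s2, s3') \<in> Rl \<Longrightarrow> s3 = s3'"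
    using assms unfolding functional_spec_def by blast+
  have "ax_star Srts Ax \<subseteq> srts_star Srts \<times> srts_star Srts"
    using Ax(1) unfolding ax_star_def ax_S_def srts_star_def top_sort_def by blast
  moreover have "rl_star Srts Rl \<subseteq> srts_star Srts \<times> srts_star Srts \<times> srts_star Srts"
    using Rl(1) unfolding rl_star_def rl_S_def srts_star_def by blast
  moreover have "s2 = s2'" if "(s1, s2) \<in> ax_star Srts Ax" "(s1, s2') \<in> ax_star Srts Ax"
    for s1 s2 s2'
    using that Ax(2) unfolding ax_star_def ax_S_def top_sort_def by blast
  moreover have "s3 = s3'" if "(s1, s2, s3) \<in> rl_star Srts Rl" "(s1, s2, s3') \<in> rl_star Srts Rl"
    for s1 s2 s3 s3'
    using that Rl(2) unfolding rl_star_def rl_S_def by blast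
  ultimately show ?thesis
    unfolding functional_spec_def by blast
qed

section \<open>Nested products in a sort without axiom\<close>

lemma not_has_type_Srt_untyped:
  "(\<And>s. (t, s) \<notin> Ax) \<Longrightarrow> \<not> has_type Ax Rl \<Gamma> (Srt t) T"
  by (blast dest: has_type_Srt_inv)

lemma not_has_type_Var_untyped:
  assumes "\<And>s. (t, s) \<notin> Ax"
  shows "\<not> has_type Ax Rl \<Gamma> (Var i) (Srt t)"
proof
  assume "has_type Ax Rl \<Gamma> (Var i) (Srt t)"
  then obtain s where "beta_eq (Srt t) ((lift 0 ^^ Suc i) (\<Gamma> ! i))"
    and "has_type Ax Rl \<Gamma> ((lift 0 ^^ Suc i) (\<Gamma> ! i)) (Srt s)"
    by (blast dest: has_type_Var_inv)
  then obtain L where "beta_star (Srt t) L" and "beta_star ((lift 0 ^^ Suc i) (\<Gamma> ! i)) L"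
    by (blast dest: church_rosser)
  then have "has_type Ax Rl \<Gamma> (Srt t) (Srt s)"
    using subject_reduction \<open>has_type Ax Rl \<Gamma> ((lift 0 ^^ Suc i) (\<Gamma> ! i)) (Srt s)\<close>
    by (metis beta_star_Srt_inv)
  with not_has_type_Srt_untyped [OF assms] show False
    by blast
qed

text \<open>For t = \<tau> this is the measure that makes the recursion defining reducibility
  well founded.\<close>

fun pi_depth ::
  "('s \<times> 's) set \<Rightarrow> ('s \<times> 's \<times> 's) set \<Rightarrow> 's \<Rightarrow> 's trm list \<Rightarrow> 's trm \<Rightarrow> nat"
  where
  "pi_depth Ax Rl t \<Gamma> (Pi B C) =
    (if has_type Ax Rl (B # \<Gamma>) C (Srt t) then Suc (pi_depth Ax Rl t (B # \<Gamma>) C) else 0)"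
| "pi_depth Ax Rl t \<Gamma> (Var i) = 0"
| "pi_depth Ax Rl t \<Gamma> (Srt s) = 0"
| "pi_depth Ax Rl t \<Gamma> (App M N) = 0"
| "pi_depth Ax Rl t \<Gamma> (Lam A M) = 0"

lemma pi_depth_other_sort:
  assumes functional: "functional_spec Srts Ax Rl"
    and absorbing: "\<And>s1 s3. (s1, t, s3) \<in> Rl \<Longrightarrow> s3 = t"
    and "has_type Ax Rl \<Gamma> X (Srt s)" and "s \<noteq> t"
  shows "pi_depth Ax Rl t \<Gamma> X = 0"
proof (cases X)
  case (Pi B C)
  obtain s1 s2 s3 where "has_type Ax Rl (B # \<Gamma>) C (Srt s2)" "(s1, s2, s3) \<in> Rl"
    and "beta_eq (Srt s) (Srt s3)"
    using has_type_Pi_inv assms(3) Pi by blast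
  with assms(4) absorbing have "\<not> has_type Ax Rl (B # \<Gamma>) C (Srt t)"
    using types_unique [OF functional] by fastforce
  with Pi show ?thesis
    by simp
qed simp_all

lemma pi_depth_subst:
  assumes functional: "functional_spec Srts Ax Rl"
    and absorbing: "\<And>s1 s3. (s1, t, s3) \<in> Rl \<Longrightarrow> s3 = t"
    and untyped: "\<And>s. (t, s) \<notin> Ax"
  shows "has_type Ax Rl \<Gamma> C (Srt s) \<Longrightarrow> ctx_subst Ax Rl N k \<Gamma> \<Gamma>' \<Longrightarrow>
   pi_depth Ax Rl t \<Gamma>' (subst C k N) \<le> pi_depth Ax Rl t \<Gamma> C"
proof (induct C arbitrary: \<Gamma> \<Gamma>' N k s)
  case (Var i)
  show ?case
  proof (cases "i = k")
    case True
    with Var have "has_type Ax Rl \<Gamma>' N (Srt s)"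
      using substitution by fastforce
    moreover from Var.prems(1) have "s \<noteq> t"
      using not_has_type_Var_untyped [OF untyped] by blast
    ultimately show ?thesis
      using True pi_depth_other_sort [OF functional absorbing] by simp
  next
    case False
    then show ?thesis
      by (cases "i < k") simp_all
  qed
next
  case (Pi D E)
  show ?case
  proof (cases "has_type Ax Rl (subst D k N # \<Gamma>') (subst E (Suc k) (lift 0 N)) (Srt t)")
    case True
    obtain s2 where E: "has_type Ax Rl (D # \<Gamma>) E (Srt s2)"
      using has_type_Pi_inv [OF Pi.prems(1)] by blast
    have sub: "ctx_subst Ax Rl (lift 0 N) (Suc k) (D # \<Gamma>) (subst D k N # \<Gamma>')"
      using Pi.prems(2) by (rule ctx_subst_Suc)
    with E have "has_type Ax Rl (subst D k N # \<Gamma>') (subst E (Suc k) (lift 0 N)) (Srt s2)"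
      using substitution by fastforce
    with True have "s2 = t"
      using types_unique [OF functional] by fastforce
    with True E Pi.hyps(2) [OF E sub] show ?thesis
      by simp
  qed simp
qed simp_all

section \<open>Reducibility\<close>

lemma ax_star_None: "(None, s) \<notin> ax_star Srts Ax"
  by (auto simp: ax_star_def ax_S_def)

lemma rl_star_None: "(s1, None, s3) \<in> rl_star Srts Rl \<Longrightarrow> s3 = None"
  by (auto simp: rl_star_def rl_S_def)

context
  fixes Srts :: "'s set" and Ax :: "('s \<times> 's) set" and Rl :: "('s \<times> 's \<times> 's) set"
    and R :: "'s option trm list \<Rightarrow> 's option trm \<Rightarrow> 's option trm \<Rightarrow> bool"
  assumes reducibility: "is_reducibility Srts Ax Rl R"
begin

lemmas reducible_iff = reducibility [unfolded is_reducibility_def, rule_format]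

lemma reducible_beta_eq_step:
  assumes "R \<Gamma> M T" and typing: "typ_star Srts Ax Rl \<Gamma> M' T" and "beta_eq M M'"
    and for_products: "\<And>B C N. T = Pi B C \<Longrightarrow> typ_star Srts Ax Rl \<Gamma> T (Srt None) \<Longrightarrow>
      R \<Gamma> N B \<Longrightarrow> R \<Gamma> (App M N) (subst C 0 N) \<Longrightarrow> R \<Gamma> (App M' N) (subst C 0 N)"
  shows "R \<Gamma> M' T"
proof -
  obtain s where wf: "wf_S Ax Rl \<Gamma>" and T: "typ_star Srts Ax Rl \<Gamma> T (Srt s)"
    and reduct: "s \<noteq> None \<or> (\<exists>s'\<in>Srts. T = Srt (Some s')) \<Longrightarrow>
      \<exists>M1 A1. beta_star M M1 \<and> beta_star T A1 \<and> typ_S Ax Rl \<Gamma> M1 A1"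
    and product: "\<And>B C N. s = None \<Longrightarrow> T = Pi B C \<Longrightarrow> R \<Gamma> N B \<Longrightarrow>
      R \<Gamma> (App M N) (subst C 0 N)"
    using \<open>R \<Gamma> M T\<close> unfolding reducible_iff [of \<Gamma> M T] by blast
  have "\<exists>M1 A1. beta_star M' M1 \<and> beta_star T A1 \<and> typ_S Ax Rl \<Gamma> M1 A1"
    if "s \<noteq> None \<or> (\<exists>s'\<in>Srts. T = Srt (Some s'))"
    using reduct [OF that] typable_reduct_of_beta_eq \<open>beta_eq M M'\<close> by blast
  moreover have "R \<Gamma> (App M' N) (subst C 0 N)" if "s = None" "T = Pi B C" "R \<Gamma> N B" for B C N
    using for_products product T that by blast
  ultimately show ?thesis
    using wf typing T unfolding reducible_iff [of \<Gamma> M' T]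
    by (intro conjI exI [of _ s] impI allI) simp_all
qed

lemma reducible_beta_eq:
  assumes functional: "functional_spec Srts Ax Rl"
  shows "R \<Gamma> M T \<Longrightarrow> typ_star Srts Ax Rl \<Gamma> M' T \<Longrightarrow> beta_eq M M' \<Longrightarrow> R \<Gamma> M' T"
proof (induct "pi_depth (ax_star Srts Ax) (rl_star Srts Rl) None \<Gamma> T"
    arbitrary: \<Gamma> T M M' rule: less_induct)
  case less
  show ?case
  proof (rule reducible_beta_eq_step [OF less.prems])
    fix B C N
    assume T: "T = Pi B C" and "typ_star Srts Ax Rl \<Gamma> T (Srt None)"
      and "R \<Gamma> N B" and MN: "R \<Gamma> (App M N) (subst C 0 N)"
    then have N: "typ_star Srts Ax Rl \<Gamma> N B"
      unfolding reducible_iff [of \<Gamma> N B] by blast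
    with less.prems(2) T have M'N: "typ_star Srts Ax Rl \<Gamma> (App M' N) (subst C 0 N)"
      by (auto intro: has_type.t_app)
    have conv: "beta_eq (App M N) (App M' N)"
      using less.prems(3) by (rule beta_eq_AppL)
    obtain s2 where C: "typ_star Srts Ax Rl (B # \<Gamma>) C (Srt s2)"
      using has_type_Pi_inv \<open>typ_star Srts Ax Rl \<Gamma> T (Srt None)\<close> T by blast
    have functional_star: "functional_spec (srts_star Srts) (ax_star Srts Ax) (rl_star Srts Rl)"
      using functional by (rule functional_spec_star)
    show "R \<Gamma> (App M' N) (subst C 0 N)"
    proof (cases "s2 = None")
      case True
      have "pi_depth (ax_star Srts Ax) (rl_star Srts Rl) None \<Gamma> (subst C 0 N)
          \<le> pi_depth (ax_star Srts Ax) (rl_star Srts Rl) None (B # \<Gamma>) C"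
        using pi_depth_subst [OF functional_star rl_star_None ax_star_None C ctx_subst_0 [OF N]] .
      also have "\<dots> < pi_depth (ax_star Srts Ax) (rl_star Srts Rl) None \<Gamma> T"
        using T C True by simp
      finally show ?thesis
        using less.hyps MN M'N conv by blast
    next
      case False
      have "typ_star Srts Ax Rl \<Gamma> (subst C 0 N) (Srt s2)"
        using substitution_0 [OF C N] by simp
      with False have "\<not> typ_star Srts Ax Rl \<Gamma> (subst C 0 N) (Srt None)"
        using types_unique [OF functional_star] by fastforce
      then show ?thesis
        using reducible_beta_eq_step [OF MN M'N conv] by blast
    qed
  qed
qed

end

theorem lemma5p19:
  fixes Srts :: "'s set" and Ax :: "('s \<times> 's) set" and Rl :: "('s \<times> 's \<times> 's) set"
    and R :: "'s option trm list \<Rightarrow> 's option trm \<Rightarrow> 's option trm \<Rightarrow> bool"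
  assumes "functional_spec Srts Ax Rl"
    and "is_reducibility Srts Ax Rl R"
    and "R \<Gamma> M A"
    and "typ_star Srts Ax Rl \<Gamma> M' A"
    and "beta_eq M M'"
  shows "R \<Gamma> M' A"
  using reducible_beta_eq [OF assms(2,1,3-5)] .

end
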